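(* Let $h_{00},h_{11},h_{22},h_{33}>0$, $\det h = h_{00}h_{11}h_{22}h_{33}$, $\beta=\frac{1}{6(\det h)^2}$, and $p(x,y)=x^4+x^3y+xy^3+y^4$, $q(x,y)=5x^4+3x^3y-xy^3-3y^4$. Consider $\dot g_{00} = -\beta\, p(-g_{11},g_{22})\, g_{00}^3$, $\dot g_{11} = -\beta\, q(-g_{11},g_{22})\, g_{00}^2 g_{11}$, $\dot g_{22} = -\beta\, q(g_{22},-g_{11})\, g_{00}^2 g_{22}$, $\dot g_{33} = 3\beta\, p(-g_{11},g_{22})\, g_{00}^2 g_{33}$, with $g_{ii}(0)=h_{ii}$. Then the solution exists for all $t\ge0$, $g_{33}$ is nondecreasing, and $(g_{11}g_{22})^{25} = \eta\,(g_{22}+g_{11})^4(2g_{22}^2-g_{11}g_{22}+2g_{11}^2)^3$ with $\eta = \frac{(h_{11}h_{22})^{25}}{(h_{22}+h_{11})^4(2h_{22}^2-h_{11}h_{22}+2h_{11}^2)^3}$. As $t\to\infty$: $g_{11},g_{22}\to(432\eta)^{1/40}$, $g_{00}\to \left(\frac{h_{00}^3h_{33}}{\det h}\right)^{1/2}(432\eta)^{1/40}$, $g_{33}\to\left(\frac{(\det h)^3}{h_{00}^3h_{33}}\right)^{1/2}(432\eta)^{-3/40}$. If $h_{11}=h_{22}$ the solution is constant. If $h_{11}<h_{22}$, then $g_{11}<g_{22}$ for all $t$, $g_{11}$ is increasing and $g_{22}$ is decreasing.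
   Context: This system is Bach flow $\partial_t g = B$, $g(0)=h$, on $\mathbb{R}\times E(2)$ ($E(2)$ the universal cover of the group of Euclidean motions of the plane) written in a diagonalizing basis: a left-invariant frame $\{\partial_0,e_1,e_2,e_3\}$ with $[e_i,e_j]=\sum \varepsilon_{ijl}E^{lk}e_k$, $E=\mathrm{diag}(-1,-1,0)$, in which the product metric is $g=\mathrm{diag}(g_{00},g_{11},g_{22},g_{33})$; $B$ is the Bach tensor. Along the flow $g_{00}g_{11}g_{22}g_{33}=\det h$ is constant. *)

theory Defs
  imports "HOL-Analysis.Analysis"
begin

definition bach_p :: "real \<Rightarrow> real \<Rightarrow> real" where
  "bach_p x y = x^4 + x^3*y + x*y^3 + y^4"

definition bach_q :: "real \<Rightarrow> real \<Rightarrow> real" where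
  "bach_q x y = 5*x^4 + 3*x^3*y - x*y^3 - 3*y^4"

definition bach_sol ::
  "real \<Rightarrow> real \<Rightarrow> real \<Rightarrow> real \<Rightarrow>
   (real \<Rightarrow> real) \<Rightarrow> (real \<Rightarrow> real) \<Rightarrow> (real \<Rightarrow> real) \<Rightarrow> (real \<Rightarrow> real) \<Rightarrow> bool" where
  "bach_sol h0 h1 h2 h3 g0 g1 g2 g3 \<longleftrightarrow>
     (let \<beta> = 1 / (6 * (h0*h1*h2*h3)^2) in
      g0 0 = h0 \<and> g1 0 = h1 \<and> g2 0 = h2 \<and> g3 0 = h3 \<and>
      (\<forall>t\<ge>0.
        (g0 has_real_derivative (- \<beta> * bach_p (- g1 t) (g2 t) * (g0 t)^3)) (at t within {0..}) \<and>
        (g1 has_real_derivative (- \<beta> * bach_q (- g1 t) (g2 t) * (g0 t)^2 * g1 t)) (at t within {0..}) \<and>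
        (g2 has_real_derivative (- \<beta> * bach_q (g2 t) (- g1 t) * (g0 t)^2 * g2 t)) (at t within {0..}) \<and>
        (g3 has_real_derivative (3 * \<beta> * bach_p (- g1 t) (g2 t) * (g0 t)^2 * g3 t)) (at t within {0..})))"

end

theory Submission
  imports Defs "HOL-Complex_Analysis.Conformal_Mappings" "HOL-Real_Asymp.Real_Asymp"
begin

text \<open>
  Write the flow as \<open>g\<^sub>i' = g\<^sub>i r\<^sub>i\<close>. Since \<open>r\<^sub>0 + r\<^sub>1 + r\<^sub>2 + r\<^sub>3 = 0\<close> and
  \<open>3 r\<^sub>0 + r\<^sub>3 = 0\<close>, the products \<open>g\<^sub>0 g\<^sub>1 g\<^sub>2 g\<^sub>3\<close> and \<open>g\<^sub>0\<^sup>3 g\<^sub>3\<close> are conserved,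
  so \<open>g\<^sub>0\<^sup>2 = K g\<^sub>1 g\<^sub>2\<close>. The quantities \<open>(g\<^sub>1 g\<^sub>2)\<^sup>2\<^sup>5\<close> and
  \<open>(g\<^sub>1 + g\<^sub>2)\<^sup>4 (2 g\<^sub>2\<^sup>2 - g\<^sub>1 g\<^sub>2 + 2 g\<^sub>1\<^sup>2)\<^sup>3\<close> have the same logarithmic derivative
  \<open>25 (r\<^sub>1 + r\<^sub>2)\<close>, which gives the first integral \<open>\<eta>\<close>. The gap \<open>g\<^sub>2 - g\<^sub>1\<close> solves a
  linear equation whose rate stays below a negative constant, so it keeps its sign and decays
  exponentially; \<open>g\<^sub>1\<close> and \<open>g\<^sub>2\<close> are then monotone with a common limit \<open>L\<close>, and the first
  integral at \<open>(L, L)\<close> reads \<open>L\<^sup>4\<^sup>0 = 432 \<eta>\<close>.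

  For existence, on the level set of the first integral the ratio \<open>l = g\<^sub>2 / g\<^sub>1\<close> obeys an
  autonomous equation \<open>l' = - l W(l)\<close> whose right-hand side vanishes only linearly at the
  equilibrium \<open>l = 1\<close>; inverting its time map gives a global solution, from which the four
  components are recovered.
\<close>

section \<open>Calculus on intervals\<close>

lemma has_real_derivative_mvt_convex:
  fixes f f' :: "real \<Rightarrow> real"
  assumes "convex S" and deriv: "\<And>t. t \<in> S \<Longrightarrow> (f has_real_derivative f' t) (at t within S)"
    and "r \<in> S" "s \<in> S" "r < s"
  obtains \<xi> where "\<xi> \<in> S" "r < \<xi>" "\<xi> < s" "f s - f r = (s - r) * f' \<xi>"
proof -
  have "is_interval S" by (simp add: is_interval_convex_1 assms(1))
  have sub: "{r..s} \<subseteq> S"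
  proof
    fix x assume "x \<in> {r..s}"
    then show "x \<in> S" by (intro mem_is_interval_1_I[OF \<open>is_interval S\<close> assms(3,4)]) auto
  qed
  have "(f has_derivative (*) (f' t)) (at t within {r..s})" if "r \<le> t" "t \<le> s" for t
    unfolding has_field_derivative_def[symmetric]
    by (rule has_field_derivative_subset[OF deriv sub]) (use sub that in auto)
  from mvt_simple[OF \<open>r < s\<close> this] obtain \<xi> where \<xi>: "\<xi> \<in> {r<..<s}" "f s - f r = f' \<xi> * (s - r)"
    by blast
  show thesis
  proof (rule that[of \<xi>])
    show "f s - f r = (s - r) * f' \<xi>" using \<xi>(2) by (simp only: mult.commute)
  qed (use sub \<xi>(1) in auto)
qed

lemma mono_on_if_has_real_derivative_nonneg:
  fixes f f' :: "real \<Rightarrow> real"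
  assumes "convex S" "\<And>t. t \<in> S \<Longrightarrow> (f has_real_derivative f' t) (at t within S)"
    and "\<And>t. t \<in> S \<Longrightarrow> 0 \<le> f' t"
  shows "mono_on S f"
proof (rule mono_onI)
  fix r s assume rs: "r \<in> S" "s \<in> S" "r \<le> s"
  show "f r \<le> f s"
  proof (cases "r = s")
    case False
    with rs(3) have "r < s" by simp
    then obtain \<xi> where "\<xi> \<in> S" "f s - f r = (s - r) * f' \<xi>"
      using has_real_derivative_mvt_convex[OF assms(1,2) rs(1,2)] by metis
    moreover have "0 \<le> (s - r) * f' \<xi>" using assms(3)[of \<xi>] \<open>\<xi> \<in> S\<close> \<open>r < s\<close> by simp
    ultimately show ?thesis by simp
  qed simp
qed

lemma antimono_on_if_has_real_derivative_nonpos: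
  fixes f f' :: "real \<Rightarrow> real"
  assumes "convex S" "\<And>t. t \<in> S \<Longrightarrow> (f has_real_derivative f' t) (at t within S)"
    and "\<And>t. t \<in> S \<Longrightarrow> f' t \<le> 0"
  shows "antimono_on S f"
proof -
  have "mono_on S (\<lambda>t. - f t)"
    using assms by (intro mono_on_if_has_real_derivative_nonneg[where f' = "\<lambda>t. - f' t"])
      (auto intro: DERIV_minus)
  then show ?thesis by (auto simp: monotone_on_def)
qed

lemma strict_mono_on_if_has_real_derivative_pos:
  fixes f f' :: "real \<Rightarrow> real"
  assumes "convex S" "\<And>t. t \<in> S \<Longrightarrow> (f has_real_derivative f' t) (at t within S)"
    and "\<And>t. t \<in> S \<Longrightarrow> 0 < f' t"
  shows "strict_mono_on S f"
proof (rule strict_mono_onI)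
  fix r s assume rs: "r \<in> S" "s \<in> S" "r < s"
  then obtain \<xi> where "\<xi> \<in> S" "f s - f r = (s - r) * f' \<xi>"
    using has_real_derivative_mvt_convex[OF assms(1,2)] by metis
  moreover have "0 < (s - r) * f' \<xi>" using assms(3)[of \<xi>] rs(3) \<open>\<xi> \<in> S\<close> by simp
  ultimately show "f r < f s" by simp
qed

lemma strict_antimono_on_if_has_real_derivative_neg:
  fixes f f' :: "real \<Rightarrow> real"
  assumes "convex S" "\<And>t. t \<in> S \<Longrightarrow> (f has_real_derivative f' t) (at t within S)"
    and "\<And>t. t \<in> S \<Longrightarrow> f' t < 0"
  shows "strict_antimono_on S f"
proof -
  have "strict_mono_on S (\<lambda>t. - f t)"
    using assms by (intro strict_mono_on_if_has_real_derivative_pos[where f' = "\<lambda>t. - f' t"])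
      (auto intro: DERIV_minus)
  then show ?thesis by (auto simp: monotone_on_def)
qed

lemma halfline_constant_if_has_derivative_zero:
  fixes f :: "real \<Rightarrow> real"
  assumes "\<And>s. 0 \<le> s \<Longrightarrow> (f has_real_derivative 0) (at s within {0..})" "0 \<le> t"
  shows "f t = f 0"
proof -
  obtain c where "\<forall>x\<in>{0..}. f x = c"
    using has_field_derivative_zero_constant[of "{0::real..}" f] assms(1) by auto
  then show ?thesis using assms(2) by simp
qed

lemma has_real_derivative_mult_rates:
  assumes "(f has_real_derivative f t * a) (at t within S)"
    and "(g has_real_derivative g t * b) (at t within S)"
  shows "((\<lambda>x. f x * g x) has_real_derivative (f t * g t) * (a + b)) (at t within S)"
  using DERIV_mult[OF assms] by (simp add: algebra_simps)

lemma has_real_derivative_power_rate: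
  assumes "(f has_real_derivative f t * a) (at t within S)"
  shows "((\<lambda>x. f x ^ n) has_real_derivative f t ^ n * (of_nat n * a)) (at t within S)"
proof (cases n)
  case (Suc m)
  have "((\<lambda>x. f x ^ n) has_real_derivative of_nat n * (f t * a * f t ^ (n - Suc 0))) (at t within S)"
    by (rule DERIV_power[OF assms])
  then show ?thesis by (simp add: Suc algebra_simps)
qed simp

lemma has_real_derivative_divide_rate:
  assumes "(f has_real_derivative f t * a) (at t within S)" "f t \<noteq> 0"
  shows "((\<lambda>x. c / f x) has_real_derivative (c / f t) * (- a)) (at t within S)"
  by (rule derivative_eq_intros assms refl)+ (use assms(2) in \<open>simp add: field_simps power2_eq_square\<close>)

lemma linear_ode_square_bounds:
  fixes f r :: "real \<Rightarrow> real"
  assumes "convex S" and deriv: "\<And>t. t \<in> S \<Longrightarrow> (f has_real_derivative f t * r t) (at t within S)"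
    and bound: "\<And>t. t \<in> S \<Longrightarrow> \<bar>r t\<bar> \<le> M" and "s \<in> S" "t \<in> S" "s \<le> t"
  shows "(f t)^2 \<le> (f s)^2 * exp (2 * M * (t - s))" and "(f s)^2 \<le> (f t)^2 * exp (2 * M * (t - s))"
proof -
  have "antimono_on S (\<lambda>u. (f u)^2 * exp (- (2 * M * u)))"
  proof (rule antimono_on_if_has_real_derivative_nonpos[OF \<open>convex S\<close>])
    fix u assume u: "u \<in> S"
    show "((\<lambda>u. (f u)^2 * exp (- (2 * M * u))) has_real_derivative
        2 * (f u)^2 * (r u - M) * exp (- (2 * M * u))) (at u within S)"
      by (rule derivative_eq_intros deriv[OF u] refl)+ (simp add: algebra_simps power2_eq_square)
    show "2 * (f u)^2 * (r u - M) * exp (- (2 * M * u)) \<le> 0"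
    proof -
      have "r u - M \<le> 0" using bound[OF u] by linarith
      then show ?thesis by (simp add: mult_nonpos_nonneg)
    qed
  qed
  then have "(f t)^2 * exp (- (2 * M * t)) \<le> (f s)^2 * exp (- (2 * M * s))"
    using assms(4-6) by (auto simp: monotone_on_def)
  then have "(f t)^2 * exp (- (2 * M * t)) * exp (2 * M * t) \<le> (f s)^2 * exp (- (2 * M * s)) * exp (2 * M * t)"
    by (rule mult_right_mono) simp
  moreover have "exp (- (2 * M * s)) * exp (2 * M * t) = exp (2 * M * (t - s))"
    unfolding exp_add[symmetric] by (simp add: algebra_simps)
  moreover have "exp (- (2 * M * t)) * exp (2 * M * t) = 1"
    by (simp flip: exp_add)
  ultimately show "(f t)^2 \<le> (f s)^2 * exp (2 * M * (t - s))"
    by (simp only: mult.assoc mult_1_right)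
  have "mono_on S (\<lambda>u. (f u)^2 * exp (2 * M * u))"
  proof (rule mono_on_if_has_real_derivative_nonneg[OF \<open>convex S\<close>])
    fix u assume u: "u \<in> S"
    show "((\<lambda>u. (f u)^2 * exp (2 * M * u)) has_real_derivative
        2 * (f u)^2 * (r u + M) * exp (2 * M * u)) (at u within S)"
      by (rule derivative_eq_intros deriv[OF u] refl)+ (simp add: algebra_simps power2_eq_square)
    show "0 \<le> 2 * (f u)^2 * (r u + M) * exp (2 * M * u)"
      using bound[OF u] by simp
  qed
  then have "(f s)^2 * exp (2 * M * s) \<le> (f t)^2 * exp (2 * M * t)"
    using assms(4-6) by (auto simp: monotone_on_def)
  then have "(f s)^2 * exp (2 * M * s) * exp (- (2 * M * s)) \<le> (f t)^2 * exp (2 * M * t) * exp (- (2 * M * s))"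
    by (rule mult_right_mono) simp
  moreover have "exp (2 * M * t) * exp (- (2 * M * s)) = exp (2 * M * (t - s))"
    unfolding exp_add[symmetric] by (simp add: algebra_simps)
  moreover have "exp (2 * M * s) * exp (- (2 * M * s)) = 1"
    by (simp flip: exp_add)
  ultimately show "(f s)^2 \<le> (f t)^2 * exp (2 * M * (t - s))"
    by (simp only: mult.assoc mult_1_right)
qed

lemma continuous_on_halfline_abs_bound:
  fixes r :: "real \<Rightarrow> real"
  assumes "continuous_on {0..} r"
  obtains M where "\<And>s. s \<in> {0..t} \<Longrightarrow> \<bar>r s\<bar> \<le> M"
proof -
  have "continuous_on {0..t} r" by (rule continuous_on_subset[OF assms]) auto
  then obtain M where "\<And>s. s \<in> {0..t} \<Longrightarrow> norm (r s) \<le> M"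
    using continuous_on_compact_bound[of "{0..t}" r] by auto
  then show thesis by (intro that) simp
qed

lemma linear_ode_zero_preserved:
  fixes f r :: "real \<Rightarrow> real"
  assumes deriv: "\<And>t. 0 \<le> t \<Longrightarrow> (f has_real_derivative f t * r t) (at t within {0..})"
    and "continuous_on {0..} r" and "f 0 = 0" and "0 \<le> t"
  shows "f t = 0"
proof -
  obtain M where M: "\<And>s. s \<in> {0..t} \<Longrightarrow> \<bar>r s\<bar> \<le> M"
    using continuous_on_halfline_abs_bound[OF assms(2)] by blast
  have "(f t)^2 \<le> (f 0)^2 * exp (2 * M * (t - 0))"
  proof (rule linear_ode_square_bounds(1)[of "{0..t}" f r M])
    show "(f has_real_derivative f s * r s) (at s within {0..t})" if "s \<in> {0..t}" for s
      by (rule has_field_derivative_subset[OF deriv]) (use that in auto)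
  qed (use \<open>0 \<le> t\<close> M in auto)
  then show ?thesis using \<open>f 0 = 0\<close> by simp
qed

lemma linear_ode_pos_preserved:
  fixes f r :: "real \<Rightarrow> real"
  assumes deriv: "\<And>t. 0 \<le> t \<Longrightarrow> (f has_real_derivative f t * r t) (at t within {0..})"
    and "continuous_on {0..} r" and "0 < f 0" and "0 \<le> t"
  shows "0 < f t"
proof (rule ccontr)
  assume "\<not> 0 < f t"
  have "continuous_on {0..t} f"
  proof (rule DERIV_continuous_on)
    show "(f has_real_derivative f u * r u) (at u within {0..t})" if "u \<in> {0..t}" for u
      by (rule has_field_derivative_subset[OF deriv]) (use that in auto)
  qed
  then obtain s where s: "0 \<le> s" "s \<le> t" "f s = 0"
    using IVT2'[of f t 0 0] \<open>\<not> 0 < f t\<close> \<open>0 < f 0\<close> \<open>0 \<le> t\<close> by auto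
  obtain M where M: "\<And>s. s \<in> {0..t} \<Longrightarrow> \<bar>r s\<bar> \<le> M"
    using continuous_on_halfline_abs_bound[OF assms(2)] by blast
  have "(f 0)^2 \<le> (f s)^2 * exp (2 * M * (s - 0))"
  proof (rule linear_ode_square_bounds(2)[of "{0..t}" f r M])
    show "(f has_real_derivative f u * r u) (at u within {0..t})" if "u \<in> {0..t}" for u
      by (rule has_field_derivative_subset[OF deriv]) (use that in auto)
  qed (use s M in auto)
  with s \<open>0 < f 0\<close> show False by simp
qed

lemma linear_ode_exp_decay:
  fixes f r :: "real \<Rightarrow> real"
  assumes deriv: "\<And>t. 0 \<le> t \<Longrightarrow> (f has_real_derivative f t * r t) (at t within {0..})"
    and "\<And>t. 0 \<le> t \<Longrightarrow> 0 < f t" and "\<And>t. 0 \<le> t \<Longrightarrow> r t \<le> - c" and "0 \<le> t"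
  shows "f t \<le> f 0 * exp (- (c * t))"
proof -
  have "antimono_on {0..} (\<lambda>u. f u * exp (c * u))"
  proof (rule antimono_on_if_has_real_derivative_nonpos)
    fix u :: real assume u: "u \<in> {0..}"
    show "((\<lambda>u. f u * exp (c * u)) has_real_derivative f u * exp (c * u) * (r u + c)) (at u within {0..})"
      using u by (intro derivative_eq_intros deriv refl) (use deriv in \<open>auto simp: algebra_simps\<close>)
    show "f u * exp (c * u) * (r u + c) \<le> 0"
      using assms(2,3)[of u] u by (intro mult_nonneg_nonpos) auto
  qed simp
  then have "f t * exp (c * t) \<le> f 0"
    using monotone_onD[of "{0..}" "(\<le>)" "(\<ge>)" "\<lambda>u. f u * exp (c * u)" 0 t] \<open>0 \<le> t\<close> by simp
  then have "f t * exp (c * t) * exp (- (c * t)) \<le> f 0 * exp (- (c * t))"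
    by (rule mult_right_mono) simp
  moreover have "exp (c * t) * exp (- (c * t)) = 1" by (simp flip: exp_add)
  ultimately show ?thesis by (simp only: mult.assoc mult_1_right)
qed

lemma mono_on_bdd_above_tendsto:
  fixes f :: "real \<Rightarrow> real"
  assumes "mono_on {0..} f" and "bdd_above (f ` {0..})"
  shows "(f \<longlongrightarrow> Sup (f ` {0..})) at_top"
proof (rule order_tendstoI)
  fix a assume "a < Sup (f ` {0..})"
  then obtain t0 where t0: "0 \<le> t0" "a < f t0"
    using less_cSup_iff[of "f ` {0..}" a] assms(2) by auto
  show "\<forall>\<^sub>F t in at_top. a < f t"
    using eventually_ge_at_top[of t0]
  proof eventually_elim
    case (elim t)
    then show ?case using mono_onD[OF assms(1), of t0 t] t0 by simp
  qed
next
  fix a assume "Sup (f ` {0..}) < a"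
  moreover have "f t \<le> Sup (f ` {0..})" if "0 \<le> t" for t
    using cSup_upper[OF _ assms(2)] that by simp
  ultimately have less: "\<And>t. 0 \<le> t \<Longrightarrow> f t < a" by (meson le_less_trans)
  show "\<forall>\<^sub>F t in at_top. f t < a"
    using eventually_ge_at_top[of 0] by (rule eventually_mono) (rule less)
qed

section \<open>Autonomous scalar equations\<close>

lemma integral_lower_limit_has_real_derivative:
  fixes g :: "real \<Rightarrow> real"
  assumes "continuous_on {a<..} g" "a < x" "x < b"
  shows "((\<lambda>y. integral {y..b} g) has_real_derivative - g x) (at x)"
proof -
  define c where "c = (a + x) / 2"
  have "continuous_on {c..b} g"
    by (rule continuous_on_subset[OF assms(1)]) (use assms(2) in \<open>auto simp: c_def\<close>)
  then have "((\<lambda>y. integral {y..b} g) has_real_derivative - g x) (at x within {c..b})"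
    by (rule integral_has_real_derivative') (use assms in \<open>auto simp: c_def\<close>)
  moreover have "at x within {c..b} = at x"
    by (rule at_within_interior) (use assms in \<open>auto simp: c_def\<close>)
  ultimately show ?thesis by simp
qed

lemma integral_inverse_distance_unbounded:
  fixes f :: "real \<Rightarrow> real"
  assumes "a < b" "continuous_on {a<..b} f" "0 < c"
    and le: "\<And>y. a < y \<Longrightarrow> y \<le> b \<Longrightarrow> c / (y - a) \<le> f y"
  shows "\<exists>x. a < x \<and> x < b \<and> M < integral {x..b} f"
proof -
  have lower: "c * ln (b - a) - c * ln (x - a) \<le> integral {x..b} f" if x: "a < x" "x \<le> b" for x
  proof (rule has_integral_le)
    show "((\<lambda>y. c / (y - a)) has_integral c * ln (b - a) - c * ln (x - a)) {x..b}"
    proof (rule fundamental_theorem_of_calculus[OF \<open>x \<le> b\<close>])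
      fix y assume "y \<in> {x..b}"
      then have "((\<lambda>y. c * ln (y - a)) has_real_derivative c * (1 / (y - a) * 1)) (at y within {x..b})"
        using x by (intro derivative_eq_intros refl) auto
      then show "((\<lambda>y. c * ln (y - a)) has_vector_derivative c / (y - a)) (at y within {x..b})"
        by (simp add: has_real_derivative_iff_has_vector_derivative)
    qed
    have "continuous_on {x..b} f" by (rule continuous_on_subset[OF assms(2)]) (use x in auto)
    then show "(f has_integral integral {x..b} f) {x..b}"
      by (intro integrable_integral integrable_continuous_interval)
  qed (use le x in auto)
  define e where "e = exp (- ((\<bar>M\<bar> + 1) / c))"
  define x where "x = a + (b - a) * e"
  have "0 < e" "e < 1" using \<open>0 < c\<close> by (auto simp: e_def)
  then have "0 < (b - a) * e" "(b - a) * e < (b - a) * 1"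
    using \<open>a < b\<close> by (intro mult_pos_pos mult_strict_left_mono; simp)+
  then have "a < x" "x < b" by (simp_all add: x_def)
  moreover have "ln (x - a) = ln (b - a) - (\<bar>M\<bar> + 1) / c"
    using \<open>a < b\<close> \<open>0 < e\<close> by (simp add: x_def ln_mult e_def)
  then have "c * ln (b - a) - c * ln (x - a) = \<bar>M\<bar> + 1"
    using \<open>0 < c\<close> by (simp add: field_simps)
  ultimately show ?thesis using lower[of x] by (intro exI[of _ x]) auto
qed

lemma autonomous_ode_decreasing_solution:
  fixes V :: "real \<Rightarrow> real"
  assumes "a < x0" and cont: "continuous_on {a<..} V" and pos: "\<And>x. a < x \<Longrightarrow> 0 < V x"
    and linear: "\<And>x. a < x \<Longrightarrow> x \<le> x0 \<Longrightarrow> V x \<le> C * (x - a)"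
  obtains u where "u 0 = x0" and "\<And>t. 0 \<le> t \<Longrightarrow> a < u t"
    and "\<And>t. 0 \<le> t \<Longrightarrow> (u has_real_derivative - V (u t)) (at t)"
proof -
  define b where "b = x0 + 1"
  define S where "S = {a<..<b}"
  \<comment> \<open>the time the solution needs to move from \<open>x0\<close> to \<open>x\<close>\<close>
  define T where "T x = integral {x..b} (\<lambda>y. 1 / V y) - integral {x0..b} (\<lambda>y. 1 / V y)" for x
  have x0: "x0 \<in> S" using \<open>a < x0\<close> by (simp add: S_def b_def)
  have cont_inv: "continuous_on {a<..} (\<lambda>y. 1 / V y)"
    using cont pos by (auto intro!: continuous_intros simp: less_imp_neq[symmetric])
  have T_deriv: "(T has_real_derivative - (1 / V x)) (at x)" if "x \<in> S" for x
    unfolding T_def using integral_lower_limit_has_real_derivative[OF cont_inv, of x b] that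
    by (auto intro!: derivative_eq_intros simp: S_def)
  have T_cont: "continuous_on S T"
    using T_deriv by (auto intro!: continuous_at_imp_continuous_on DERIV_isCont)
  have "strict_antimono_on S T"
    by (rule strict_antimono_on_if_has_real_derivative_neg[where f' = "\<lambda>x. - (1 / V x)"])
      (use T_deriv pos in \<open>auto simp: S_def intro: has_field_derivative_at_within\<close>)
  then have inj: "inj_on T S"
    by (intro inj_onI) (metis linorder_neqE_linordered_idom monotone_onD order_less_irrefl)
  have T_left: "T x = integral {x..x0} (\<lambda>y. 1 / V y)" if "a < x" "x \<le> x0" for x
  proof -
    have "continuous_on {x..b} (\<lambda>y. 1 / V y)"
      by (rule continuous_on_subset[OF cont_inv]) (use that in auto)
    from integrable_continuous_interval[OF this]
    have "integral {x..x0} (\<lambda>y. 1 / V y) + integral {x0..b} (\<lambda>y. 1 / V y)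
        = integral {x..b} (\<lambda>y. 1 / V y)"
      by (intro Henstock_Kurzweil_Integration.integral_combine) (use that in \<open>auto simp: b_def\<close>)
    then show ?thesis by (simp add: T_def)
  qed
  have "0 < C * (x0 - a)" using pos[OF \<open>a < x0\<close>] linear[of x0] \<open>a < x0\<close> by simp
  then have "0 < C" using \<open>a < x0\<close> by (simp add: zero_less_mult_iff)
  have unbounded: "\<exists>x. a < x \<and> x < x0 \<and> M < T x" for M
  proof -
    have "(1 / C) / (y - a) \<le> 1 / V y" if "a < y" "y \<le> x0" for y
      using linear[OF that] pos[OF that(1)] \<open>0 < C\<close> that by (simp add: frac_le field_simps)
    moreover have "continuous_on {a<..x0} (\<lambda>y. 1 / V y)"
      by (rule continuous_on_subset[OF cont_inv]) auto
    ultimately obtain x where "a < x" "x < x0" "M < integral {x..x0} (\<lambda>y. 1 / V y)"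
      using integral_inverse_distance_unbounded[of a x0 "\<lambda>y. 1 / V y" "1 / C" M]
        \<open>a < x0\<close> \<open>0 < C\<close> by auto
    then show ?thesis using T_left[of x] by auto
  qed
  have onto: "t \<in> T ` S" if t: "0 \<le> t" for t
  proof -
    obtain x1 where x1: "a < x1" "x1 < x0" "t < T x1" using unbounded by blast
    have "continuous_on {x1..x0} T"
      by (rule continuous_on_subset[OF T_cont]) (use x1 in \<open>auto simp: S_def b_def\<close>)
    then obtain x where "x1 \<le> x" "x \<le> x0" "T x = t"
      using IVT2'[of T x0 t x1] x1 t by (auto simp: T_def)
    moreover from this have "x \<in> S" using x1 by (auto simp: S_def b_def)
    ultimately show ?thesis by blast
  qed
  define u where "u = inv_into S T"
  have u_mem: "u t \<in> S" and T_u: "T (u t) = t" if "0 \<le> t" for t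
    using onto[OF that] by (auto simp: u_def inv_into_into f_inv_into_f)
  show thesis
  proof
    show "u 0 = x0" using inv_into_f_f[OF inj x0] by (simp add: u_def T_def)
    show "a < u t" if "0 \<le> t" for t using u_mem[OF that] by (simp add: S_def)
    show "(u has_real_derivative - V (u t)) (at t)" if "0 \<le> t" for t
    proof -
      have "(u has_real_derivative inverse (- (1 / V (u t)))) (at t)"
        by (rule has_field_derivative_inverse_strong_x[where g = u and y = t and f = T and S = S,
              OF T_deriv[OF u_mem[OF that]] _ _ T_cont])
          (use pos[of "u t"] u_mem[OF that] T_u[OF that] inj in \<open>auto simp: S_def u_def\<close>)
      then show ?thesis by simp
    qed
  qed
qed

section \<open>The polynomials of the reduced flow\<close>

definition bach_q_cofactor :: "real \<Rightarrow> real \<Rightarrow> real" where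
  "bach_q_cofactor x y = 5*x^3 + 2*x^2*y + 2*x*y^2 + 3*y^3"

lemma bach_p_commute: "bach_p x y = bach_p y x"
  unfolding bach_p_def by algebra

lemma bach_p_minus_minus: "bach_p (- x) (- y) = bach_p x y"
  unfolding bach_p_def by algebra

lemma bach_q_minus_minus: "bach_q (- x) (- y) = bach_q x y"
  unfolding bach_q_def by algebra

lemma bach_p_minus_eq: "bach_p (- x) y = (x - y)^2 * (x^2 + x*y + y^2)"
  unfolding bach_p_def by algebra

lemma bach_p_minus_nonneg: "0 \<le> bach_p (- x) y"
proof -
  have "4 * (x^2 + x*y + y^2) = (2*x + y)^2 + 3 * y^2" by algebra
  then have "0 \<le> x^2 + x*y + y^2" by (smt (verit) zero_le_power2)
  then show ?thesis unfolding bach_p_minus_eq by simp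
qed

lemma bach_q_minus_left_eq: "bach_q (- x) y = (x - y) * bach_q_cofactor x y"
  unfolding bach_q_def bach_q_cofactor_def by algebra

lemma bach_q_minus_right_eq: "bach_q y (- x) = (y - x) * bach_q_cofactor y x"
  unfolding bach_q_def bach_q_cofactor_def by algebra

lemma bach_q_add: "bach_q (- x) y + bach_q y (- x) = 2 * bach_p (- x) y"
  unfolding bach_p_def bach_q_def by algebra

lemma bach_q_diff: "bach_q y (- x) - bach_q (- x) y = 4 * (y - x) * (y + x) * (2*y^2 - x*y + 2*x^2)"
  unfolding bach_q_def by algebra

lemma bach_p_minus_bach_q: "bach_p (- x) y - bach_q (- x) y = 2 * (y - x) * (y + x) * (2*y^2 - x*y + 2*x^2)"
  unfolding bach_p_def bach_q_def by algebra

lemma bach_q_cofactor_ge: "0 < x \<Longrightarrow> 0 < y \<Longrightarrow> 5 * x^3 \<le> bach_q_cofactor x y"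
  unfolding bach_q_cofactor_def by (simp add: add_nonneg_nonneg)

lemma bach_q_cofactor_pos: "0 < x \<Longrightarrow> 0 < y \<Longrightarrow> 0 < bach_q_cofactor x y"
  unfolding bach_q_cofactor_def by (simp add: add_pos_pos)

lemma invariant_quadratic_pos: "0 < x \<Longrightarrow> 0 < y \<Longrightarrow> 0 < 2*y^2 - x*y + 2*(x::real)^2"
proof -
  assume "0 < x" "0 < y"
  have "2*y^2 - x*y + 2*x^2 = (x - y)^2 + y^2 + x^2 + x*y" by algebra
  moreover have "0 \<le> (x - y)^2" "0 \<le> y^2" "0 < x^2" "0 < x*y" using \<open>0 < x\<close> \<open>0 < y\<close> by simp_all
  ultimately show ?thesis by linarith
qed

lemma invariant_denominator_rate_identity:
  fixes x y k :: real
  defines "a \<equiv> - k * bach_q (- x) y" and "b \<equiv> - k * bach_q y (- x)"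
  shows "4 * (y*b + x*a) * (2*y^2 - x*y + 2*x^2) + 3 * (y + x) * (4*y^2*b - x*y*(a + b) + 4*x^2*a)
       = 25 * (a + b) * (y + x) * (2*y^2 - x*y + 2*x^2)"
  unfolding a_def b_def bach_q_def by algebra

lemma invariant_denominator_has_derivative:
  fixes x y :: "real \<Rightarrow> real"
  assumes "(x has_real_derivative x t * a) (at t within S)" "(y has_real_derivative y t * b) (at t within S)"
    and "a = - k * bach_q (- x t) (y t)" "b = - k * bach_q (y t) (- x t)"
  shows "((\<lambda>t. (y t + x t)^4 * (2 * (y t)^2 - x t * y t + 2 * (x t)^2)^3) has_real_derivative
      (y t + x t)^4 * (2 * (y t)^2 - x t * y t + 2 * (x t)^2)^3 * (25 * (a + b))) (at t within S)"
proof -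
  have core: "4 * (y t*b + x t*a) * (2*(y t)^2 - x t*y t + 2*(x t)^2) + 3 * (y t + x t) * (4*(y t)^2*b - x t*y t*(a + b) + 4*(x t)^2*a)
       = 25 * (a + b) * (y t + x t) * (2*(y t)^2 - x t*y t + 2*(x t)^2)"
    unfolding assms(3,4) by (rule invariant_denominator_rate_identity)
  show ?thesis
    by (rule derivative_eq_intros assms(1,2) refl)+ (use core in \<open>simp add: eval_nat_numeral, algebra\<close>)
qed

text \<open>\<open>bach_phi l\<close> is \<open>1/40\<close> times the logarithm of the first integral
  \<open>(x y)\<^sup>2\<^sup>5 / ((x + y)\<^sup>4 (2 y\<^sup>2 - x y + 2 x\<^sup>2)\<^sup>3)\<close> at \<open>(x, y) = (1, l)\<close>.\<close>

definition bach_phi :: "real \<Rightarrow> real" where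
  "bach_phi l = (25 * ln l - 4 * ln (1 + l) - 3 * ln (2 * l^2 - l + 2)) / 40"

definition bach_phi' :: "real \<Rightarrow> real" where
  "bach_phi' l = (25 / l - 4 / (1 + l) - 3 * (4 * l - 1) / (2 * l^2 - l + 2)) / 40"

lemma bach_phi_has_derivative:
  assumes "0 < l"
  shows "(bach_phi has_real_derivative bach_phi' l) (at l)"
proof -
  have D: "0 < 2 * l^2 - l + 2" using invariant_quadratic_pos[of 1 l] assms by simp
  have a: "((\<lambda>x. ln x) has_real_derivative 1 / l) (at l)"
    using assms by (auto intro!: derivative_eq_intros)
  have b: "((\<lambda>x. ln (1 + x)) has_real_derivative 1 / (1 + l)) (at l)"
    using assms by (auto intro!: derivative_eq_intros)
  have c: "((\<lambda>x. ln (2 * x^2 - x + 2)) has_real_derivative (4 * l - 1) / (2 * l^2 - l + 2)) (at l)"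
    using D by (auto intro!: derivative_eq_intros)
  have "(bach_phi has_real_derivative (25 * (1 / l) - 4 * (1 / (1 + l))
      - 3 * ((4 * l - 1) / (2 * l^2 - l + 2))) / 40) (at l)"
    unfolding bach_phi_def[abs_def] by (intro DERIV_cdivide DERIV_diff DERIV_cmult a b c)
  then show ?thesis by (simp add: bach_phi'_def)
qed

lemma bach_phi'_eq:
  assumes "0 < l"
  shows "4 * l * (1 + l) * (2 * l^2 - l + 2) * (l - 1) * bach_phi' l = - bach_q (-1) l"
proof -
  define D where "D = 2 * l^2 - l + 2"
  define P where "P = 1 + l"
  have "0 < D" using invariant_quadratic_pos[of 1 l] assms by (simp add: D_def)
  moreover have "0 < P" using assms by (simp add: P_def)
  ultimately have "40 * bach_phi' l * (l * P * D) = 25 * P * D - 4 * l * D - 3 * (4 * l - 1) * l * P"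
    unfolding bach_phi'_def D_def[symmetric] P_def[symmetric] using assms by (simp add: field_simps)
  then show ?thesis unfolding bach_q_def D_def P_def by algebra
qed

section \<open>Properties of an arbitrary solution\<close>

lemma bach_sol_swap:
  assumes "bach_sol h0 h1 h2 h3 g0 g1 g2 g3"
  shows "bach_sol h0 h2 h1 h3 g0 g2 g1 g3"
proof -
  have p: "bach_p (- g2 t) (g1 t) = bach_p (- g1 t) (g2 t)" for t
    using bach_p_commute[of "- g2 t" "g1 t"] bach_p_minus_minus[of "- g1 t" "g2 t"] by simp
  have q: "bach_q (- g2 t) (g1 t) = bach_q (g2 t) (- g1 t)"
    "bach_q (g1 t) (- g2 t) = bach_q (- g1 t) (g2 t)" for t
    using bach_q_minus_minus[of "g2 t" "- g1 t"] bach_q_minus_minus[of "- g1 t" "g2 t"] by simp_all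
  have det: "h0 * h2 * h1 * h3 = h0 * h1 * h2 * h3" by simp
  show ?thesis using assms unfolding bach_sol_def Let_def det by (simp only: p q) auto
qed

locale bach_solution =
  fixes h0 h1 h2 h3 :: real and g0 g1 g2 g3 :: "real \<Rightarrow> real"
  assumes h_pos: "0 < h0" "0 < h1" "0 < h2" "0 < h3"
    and sol: "bach_sol h0 h1 h2 h3 g0 g1 g2 g3"
begin

definition "\<beta> = 1 / (6 * (h0 * h1 * h2 * h3)^2)"
definition "rate0 t = - \<beta> * (g0 t)^2 * bach_p (- g1 t) (g2 t)"
definition "rate1 t = - \<beta> * (g0 t)^2 * bach_q (- g1 t) (g2 t)"
definition "rate2 t = - \<beta> * (g0 t)^2 * bach_q (g2 t) (- g1 t)"
definition "rate3 t = 3 * \<beta> * (g0 t)^2 * bach_p (- g1 t) (g2 t)"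

lemma \<beta>_pos: "0 < \<beta>"
  using h_pos by (simp add: \<beta>_def)

lemma initial: "g0 0 = h0" "g1 0 = h1" "g2 0 = h2" "g3 0 = h3"
  using sol by (simp_all add: bach_sol_def Let_def)

lemma has_derivative_rates:
  assumes "0 \<le> t"
  shows "(g0 has_real_derivative g0 t * rate0 t) (at t within {0..})"
    and "(g1 has_real_derivative g1 t * rate1 t) (at t within {0..})"
    and "(g2 has_real_derivative g2 t * rate2 t) (at t within {0..})"
    and "(g3 has_real_derivative g3 t * rate3 t) (at t within {0..})"
proof -
  have "(g0 has_real_derivative - \<beta> * bach_p (- g1 t) (g2 t) * (g0 t)^3) (at t within {0..}) \<and>
    (g1 has_real_derivative - \<beta> * bach_q (- g1 t) (g2 t) * (g0 t)^2 * g1 t) (at t within {0..}) \<and>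
    (g2 has_real_derivative - \<beta> * bach_q (g2 t) (- g1 t) * (g0 t)^2 * g2 t) (at t within {0..}) \<and>
    (g3 has_real_derivative 3 * \<beta> * bach_p (- g1 t) (g2 t) * (g0 t)^2 * g3 t) (at t within {0..})"
    using sol assms unfolding bach_sol_def Let_def \<beta>_def[symmetric] by blast
  moreover have "- \<beta> * bach_p (- g1 t) (g2 t) * (g0 t)^3 = g0 t * rate0 t"
    "- \<beta> * bach_q (- g1 t) (g2 t) * (g0 t)^2 * g1 t = g1 t * rate1 t"
    "- \<beta> * bach_q (g2 t) (- g1 t) * (g0 t)^2 * g2 t = g2 t * rate2 t"
    "3 * \<beta> * bach_p (- g1 t) (g2 t) * (g0 t)^2 * g3 t = g3 t * rate3 t"
    unfolding rate0_def rate1_def rate2_def rate3_def by (simp_all add: power2_eq_square power3_eq_cube)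
  ultimately show "(g0 has_real_derivative g0 t * rate0 t) (at t within {0..})"
    "(g1 has_real_derivative g1 t * rate1 t) (at t within {0..})"
    "(g2 has_real_derivative g2 t * rate2 t) (at t within {0..})"
    "(g3 has_real_derivative g3 t * rate3 t) (at t within {0..})"
    by simp_all
qed

lemma continuous_on_g: "continuous_on {0..} g0" "continuous_on {0..} g1"
    "continuous_on {0..} g2" "continuous_on {0..} g3"
  by (rule DERIV_continuous_on, rule has_derivative_rates, simp)+

lemma continuous_on_rates: "continuous_on {0..} rate0" "continuous_on {0..} rate1"
    "continuous_on {0..} rate2" "continuous_on {0..} rate3"
  unfolding rate0_def[abs_def] rate1_def[abs_def] rate2_def[abs_def] rate3_def[abs_def]
    bach_p_def bach_q_def
  by (intro continuous_intros continuous_on_g)+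

lemma positive: assumes "0 \<le> t" shows "0 < g0 t" "0 < g1 t" "0 < g2 t" "0 < g3 t"
proof -
  note pos = linear_ode_pos_preserved[OF has_derivative_rates(1) continuous_on_rates(1)]
    linear_ode_pos_preserved[OF has_derivative_rates(2) continuous_on_rates(2)]
    linear_ode_pos_preserved[OF has_derivative_rates(3) continuous_on_rates(3)]
    linear_ode_pos_preserved[OF has_derivative_rates(4) continuous_on_rates(4)]
  show "0 < g0 t" by (rule pos(1)) (use initial h_pos assms in simp_all)
  show "0 < g1 t" by (rule pos(2)) (use initial h_pos assms in simp_all)
  show "0 < g2 t" by (rule pos(3)) (use initial h_pos assms in simp_all)
  show "0 < g3 t" by (rule pos(4)) (use initial h_pos assms in simp_all)
qed

lemma rates_sum_zero: "rate0 t + rate1 t + rate2 t + rate3 t = 0"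
  using bach_q_add[of "g1 t" "g2 t"] unfolding rate0_def rate1_def rate2_def rate3_def by algebra

lemma det_conserved:
  assumes "0 \<le> t"
  shows "g0 t * g1 t * g2 t * g3 t = h0 * h1 * h2 * h3"
proof -
  have "((\<lambda>t. g0 t * g1 t * g2 t * g3 t) has_real_derivative 0) (at s within {0..})" if "0 \<le> s" for s
  proof -
    have "((\<lambda>t. g0 t * g1 t * g2 t * g3 t) has_real_derivative
        (g0 s * g1 s * g2 s * g3 s) * (rate0 s + rate1 s + rate2 s + rate3 s)) (at s within {0..})"
      using that by (intro has_real_derivative_mult_rates has_derivative_rates)
    then show ?thesis by (simp add: rates_sum_zero)
  qed
  from halfline_constant_if_has_derivative_zero[OF this assms] show ?thesis by (simp add: initial)
qed

lemma g0_cube_g3_conserved: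
  assumes "0 \<le> t"
  shows "(g0 t)^3 * g3 t = h0^3 * h3"
proof -
  have "((\<lambda>t. (g0 t)^3 * g3 t) has_real_derivative 0) (at s within {0..})" if "0 \<le> s" for s
  proof -
    have "((\<lambda>t. (g0 t)^3 * g3 t) has_real_derivative
        ((g0 s)^3 * g3 s) * (of_nat 3 * rate0 s + rate3 s)) (at s within {0..})"
      using that by (intro has_real_derivative_mult_rates has_real_derivative_power_rate has_derivative_rates)
    then show ?thesis by (simp add: rate0_def rate3_def)
  qed
  from halfline_constant_if_has_derivative_zero[OF this assms] show ?thesis by (simp add: initial)
qed

definition "K = h0^3 * h3 / (h0 * h1 * h2 * h3)"

lemma K_pos: "0 < K"
  using h_pos by (simp add: K_def)

lemma g0_square:
  assumes "0 \<le> t"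
  shows "(g0 t)^2 = K * g1 t * g2 t"
proof -
  have "(g0 t)^2 * (h0 * h1 * h2 * h3) = (g0 t)^2 * (g0 t * g1 t * g2 t * g3 t)"
    by (simp add: det_conserved[OF assms])
  also have "\<dots> = ((g0 t)^3 * g3 t) * g1 t * g2 t" by algebra
  finally have "(g0 t)^2 * (h0 * h1 * h2 * h3) = h0^3 * h3 * g1 t * g2 t"
    by (simp add: g0_cube_g3_conserved[OF assms])
  then show ?thesis using h_pos by (simp add: K_def field_simps)
qed

definition "eta = (h1 * h2)^25 / ((h2 + h1)^4 * (2*h2^2 - h1*h2 + 2*h1^2)^3)"

lemma invariant:
  assumes "0 \<le> t"
  shows "(g1 t * g2 t)^25 = eta * (g2 t + g1 t)^4 * (2 * (g2 t)^2 - g1 t * g2 t + 2 * (g1 t)^2)^3"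
proof -
  define D where "D s = (g2 s + g1 s)^4 * (2 * (g2 s)^2 - g1 s * g2 s + 2 * (g1 s)^2)^3" for s
  define Q where "Q s = (g1 s * g2 s)^25 - eta * D s" for s
  have dQ: "(Q has_real_derivative Q s * (25 * (rate1 s + rate2 s))) (at s within {0..})" if "0 \<le> s" for s
  proof -
    have P: "((\<lambda>s. (g1 s * g2 s)^25) has_real_derivative
        (g1 s * g2 s)^25 * (of_nat 25 * (rate1 s + rate2 s))) (at s within {0..})"
      using that by (intro has_real_derivative_power_rate has_real_derivative_mult_rates has_derivative_rates)
    have "(D has_real_derivative D s * (25 * (rate1 s + rate2 s))) (at s within {0..})"
      unfolding D_def
      by (rule invariant_denominator_has_derivative[where k = "\<beta> * (g0 s)^2",
            OF has_derivative_rates(2,3)[OF that]])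
        (simp_all add: rate1_def rate2_def)
    with P have "(Q has_real_derivative (g1 s * g2 s)^25 * (of_nat 25 * (rate1 s + rate2 s))
        - eta * (D s * (25 * (rate1 s + rate2 s)))) (at s within {0..})"
      unfolding Q_def[abs_def] by (intro DERIV_diff DERIV_cmult)
    then show ?thesis by (simp add: Q_def algebra_simps)
  qed
  have "continuous_on {0..} (\<lambda>s. 25 * (rate1 s + rate2 s))"
    using continuous_on_rates by (intro continuous_intros)
  moreover have "Q 0 = 0"
    using invariant_quadratic_pos[OF h_pos(2,3)] h_pos by (simp add: Q_def D_def eta_def initial)
  ultimately have "Q t = 0"
    using linear_ode_zero_preserved[where f = Q and r = "\<lambda>s. 25 * (rate1 s + rate2 s)"] dQ assms by blast
  then show ?thesis by (simp add: Q_def D_def mult.assoc)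
qed

lemma g3_mono: "mono_on {0..} g3"
proof (rule mono_on_if_has_real_derivative_nonneg)
  fix t :: real assume "t \<in> {0..}"
  then show "(g3 has_real_derivative g3 t * rate3 t) (at t within {0..})"
    by (intro has_derivative_rates) simp
  show "0 \<le> g3 t * rate3 t"
    using \<beta>_pos positive(4)[of t] \<open>t \<in> {0..}\<close> bach_p_minus_nonneg[of "g1 t" "g2 t"]
    by (simp add: rate3_def)
qed simp

definition "gap_rate t = - \<beta> * (g0 t)^2 *
  (g2 t * bach_q_cofactor (g2 t) (g1 t) + g1 t * bach_q_cofactor (g1 t) (g2 t))"

lemma gap_has_derivative:
  assumes "0 \<le> t"
  shows "((\<lambda>t. g2 t - g1 t) has_real_derivative (g2 t - g1 t) * gap_rate t) (at t within {0..})"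
proof -
  have "g2 t * rate2 t - g1 t * rate1 t = (g2 t - g1 t) * gap_rate t"
    unfolding rate1_def rate2_def gap_rate_def bach_q_minus_left_eq bach_q_minus_right_eq by algebra
  then show ?thesis using DERIV_diff[OF has_derivative_rates(3,2)[OF assms]] by simp
qed

lemma continuous_on_gap_rate: "continuous_on {0..} gap_rate"
  unfolding gap_rate_def[abs_def] bach_q_cofactor_def by (intro continuous_intros continuous_on_g)+

lemma constant_if_equal:
  assumes "h1 = h2" and "0 \<le> t"
  shows "g0 t = h0" "g1 t = h1" "g2 t = h2" "g3 t = h3"
proof -
  have "g2 0 - g1 0 = 0" using initial(2,3) assms(1) by simp
  from linear_ode_zero_preserved[OF gap_has_derivative continuous_on_gap_rate this]
  have "g2 s - g1 s = 0" if "0 \<le> s" for s using that by simp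
  then have "rate0 s = 0 \<and> rate1 s = 0 \<and> rate2 s = 0 \<and> rate3 s = 0" if "0 \<le> s" for s
    using that by (simp add: rate0_def rate1_def rate2_def rate3_def bach_p_minus_eq
        bach_q_minus_left_eq bach_q_minus_right_eq)
  then have D: "(g0 has_real_derivative 0) (at s within {0..})" "(g1 has_real_derivative 0) (at s within {0..})"
    "(g2 has_real_derivative 0) (at s within {0..})" "(g3 has_real_derivative 0) (at s within {0..})"
    if "0 \<le> s" for s
    using has_derivative_rates[OF that] that by simp_all
  show "g0 t = h0" "g1 t = h1" "g2 t = h2" "g3 t = h3"
    using halfline_constant_if_has_derivative_zero[OF D(1) assms(2)] halfline_constant_if_has_derivative_zero[OF D(2) assms(2)]
      halfline_constant_if_has_derivative_zero[OF D(3) assms(2)] halfline_constant_if_has_derivative_zero[OF D(4) assms(2)]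
    by (simp_all add: initial)
qed

context
  assumes lt: "h1 < h2"
begin

lemma g1_less_g2: "0 \<le> t \<Longrightarrow> g1 t < g2 t"
  using linear_ode_pos_preserved[OF gap_has_derivative continuous_on_gap_rate, of t] lt by (simp add: initial)

lemma rate1_pos: "0 \<le> t \<Longrightarrow> 0 < rate1 t"
proof -
  assume t: "0 \<le> t"
  have "rate1 t = \<beta> * (g0 t)^2 * ((g2 t - g1 t) * bach_q_cofactor (g1 t) (g2 t))"
    by (simp add: rate1_def bach_q_minus_left_eq algebra_simps)
  then show ?thesis
    using \<beta>_pos g1_less_g2[OF t] positive[OF t] bach_q_cofactor_pos[of "g1 t" "g2 t"] by simp
qed

lemma rate2_neg: "0 \<le> t \<Longrightarrow> rate2 t < 0"
proof -
  assume t: "0 \<le> t"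
  have "rate2 t = - (\<beta> * (g0 t)^2 * ((g2 t - g1 t) * bach_q_cofactor (g2 t) (g1 t)))"
    by (simp add: rate2_def bach_q_minus_right_eq algebra_simps)
  then show ?thesis
    using \<beta>_pos g1_less_g2[OF t] positive[OF t] bach_q_cofactor_pos[of "g2 t" "g1 t"] by simp
qed

lemma g1_strict_mono: "strict_mono_on {0..} g1"
  by (rule strict_mono_on_if_has_real_derivative_pos[OF _ has_derivative_rates(2)])
    (use rate1_pos positive in auto)

lemma g2_strict_antimono: "strict_antimono_on {0..} g2"
  by (rule strict_antimono_on_if_has_real_derivative_neg[OF _ has_derivative_rates(3)])
    (use rate2_neg positive in \<open>auto simp: mult_pos_neg\<close>)

lemma gap_rate_le: "0 \<le> t \<Longrightarrow> gap_rate t \<le> - (5 * \<beta> * K * h1^6)"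
proof -
  assume t: "0 \<le> t"
  have g1_ge: "h1 \<le> g1 t"
    using mono_onD[OF strict_mono_on_imp_mono_on[OF g1_strict_mono], of 0 t] t by (simp add: initial)
  then have "h1 * h1 \<le> g1 t * g2 t"
    using g1_less_g2[OF t] h_pos by (intro mult_mono) auto
  then have g0_ge: "K * h1^2 \<le> (g0 t)^2"
    using g0_square[OF t] K_pos by (simp add: power2_eq_square mult.assoc)
  have "5 * h1^4 \<le> 5 * (g1 t)^4" using g1_ge h_pos by (simp add: power_mono)
  also have "\<dots> = g1 t * (5 * (g1 t)^3)" by (simp add: power_Suc[symmetric] del: power_Suc)
  also have "\<dots> \<le> g1 t * bach_q_cofactor (g1 t) (g2 t)"
    using bach_q_cofactor_ge[of "g1 t" "g2 t"] positive[OF t] by simp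
  also have "\<dots> \<le> g2 t * bach_q_cofactor (g2 t) (g1 t) + g1 t * bach_q_cofactor (g1 t) (g2 t)"
    using bach_q_cofactor_pos[of "g2 t" "g1 t"] positive[OF t] by simp
  finally have "(K * h1^2) * (5 * h1^4)
      \<le> (g0 t)^2 * (g2 t * bach_q_cofactor (g2 t) (g1 t) + g1 t * bach_q_cofactor (g1 t) (g2 t))"
    using g0_ge K_pos by (intro mult_mono) auto
  then have "\<beta> * ((K * h1^2) * (5 * h1^4))
      \<le> \<beta> * ((g0 t)^2 * (g2 t * bach_q_cofactor (g2 t) (g1 t) + g1 t * bach_q_cofactor (g1 t) (g2 t)))"
    using \<beta>_pos by (intro mult_left_mono) auto
  moreover have "\<beta> * ((K * h1^2) * (5 * h1^4)) = 5 * \<beta> * K * h1^6" by algebra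
  ultimately show ?thesis by (simp add: gap_rate_def)
qed

lemma gap_tendsto_zero: "((\<lambda>t. g2 t - g1 t) \<longlongrightarrow> 0) at_top"
proof (rule tendsto_sandwich)
  define c where "c = 5 * \<beta> * K * h1^6"
  have "0 < c" using \<beta>_pos K_pos h_pos by (simp add: c_def)
  show "\<forall>\<^sub>F t in at_top. 0 \<le> g2 t - g1 t"
    using eventually_ge_at_top[of 0] by (rule eventually_mono) (simp add: g1_less_g2 less_imp_le)
  show "\<forall>\<^sub>F t in at_top. g2 t - g1 t \<le> (h2 - h1) * exp (- (c * t))"
    using eventually_ge_at_top[of 0]
  proof (rule eventually_mono)
    fix t :: real assume "0 \<le> t"
    from linear_ode_exp_decay[OF gap_has_derivative _ _ this, of c] g1_less_g2 gap_rate_le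
    show "g2 t - g1 t \<le> (h2 - h1) * exp (- (c * t))" by (simp add: initial c_def)
  qed
  have "((\<lambda>t. exp (- (c * t))) \<longlongrightarrow> 0) at_top"
    using \<open>0 < c\<close> by real_asymp
  then show "((\<lambda>t. (h2 - h1) * exp (- (c * t))) \<longlongrightarrow> 0) at_top"
    by (simp add: tendsto_mult_right_zero)
qed simp

lemma common_limit_if_less: "\<exists>L>0. (g1 \<longlongrightarrow> L) at_top \<and> (g2 \<longlongrightarrow> L) at_top"
proof -
  have "g2 t \<le> h2" if "0 \<le> t" for t
  proof (cases "t = 0")
    case False
    then show ?thesis
      using monotone_onD[OF g2_strict_antimono, of 0 t] that by (simp add: initial)
  qed (simp add: initial)
  then have "g1 t \<le> h2" if "0 \<le> t" for t
    using g1_less_g2[OF that] that by (meson less_imp_le order_trans)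
  then have "bdd_above (g1 ` {0..})" by (intro bdd_aboveI2[where M = h2]) simp
  then have lim1: "(g1 \<longlongrightarrow> Sup (g1 ` {0..})) at_top"
    using g1_strict_mono by (intro mono_on_bdd_above_tendsto strict_mono_on_imp_mono_on)
  then have "((\<lambda>t. g1 t + (g2 t - g1 t)) \<longlongrightarrow> Sup (g1 ` {0..}) + 0) at_top"
    by (intro tendsto_add gap_tendsto_zero)
  then have lim2: "(g2 \<longlongrightarrow> Sup (g1 ` {0..})) at_top" by simp
  have "g1 0 \<le> Sup (g1 ` {0..})"
    by (rule cSup_upper[OF _ \<open>bdd_above (g1 ` {0..})\<close>]) simp
  then have "0 < Sup (g1 ` {0..})" using initial h_pos by simp
  with lim1 lim2 show ?thesis by blast
qed

end

lemma limits_if_common_limit: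
  assumes lim1: "(g1 \<longlongrightarrow> L) at_top" and lim2: "(g2 \<longlongrightarrow> L) at_top" and "0 < L"
  shows "L = (432 * eta) powr (1/40)"
    and "(g0 \<longlongrightarrow> sqrt K * L) at_top"
    and "(g3 \<longlongrightarrow> (h0 * h1 * h2 * h3) / (sqrt K * L^3)) at_top"
proof -
  let ?R = "\<lambda>t. (g1 t * g2 t)^25 - eta * (g2 t + g1 t)^4 * (2 * (g2 t)^2 - g1 t * g2 t + 2 * (g1 t)^2)^3"
  have "(?R \<longlongrightarrow> (L * L)^25 - eta * (L + L)^4 * (2 * L^2 - L * L + 2 * L^2)^3) at_top"
    by (intro tendsto_intros lim1 lim2)
  moreover have "(?R \<longlongrightarrow> 0) at_top"
    by (rule tendsto_eventually, rule eventually_mono[OF eventually_ge_at_top[of 0]]) (simp add: invariant)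
  ultimately have "(L * L)^25 - eta * (L + L)^4 * (2 * L^2 - L * L + 2 * L^2)^3 = 0"
    using tendsto_unique[OF trivial_limit_at_top_linorder] by blast
  then have "L^10 * (L^40 - 432 * eta) = 0" by algebra
  then have "L powr 40 = 432 * eta" using \<open>0 < L\<close> by (simp add: powr_realpow)
  then have "(432 * eta) powr (1/40) = (L powr 40) powr (1/40)" by simp
  also have "\<dots> = L" using \<open>0 < L\<close> by (simp only: powr_powr) simp
  finally show "L = (432 * eta) powr (1/40)" ..
  have "(g0 \<longlongrightarrow> sqrt (K * (L * L))) at_top"
  proof (rule Lim_transform_eventually)
    show "((\<lambda>t. sqrt (K * (g1 t * g2 t))) \<longlongrightarrow> sqrt (K * (L * L))) at_top"
      by (intro tendsto_intros lim1 lim2)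
    show "\<forall>\<^sub>F t in at_top. sqrt (K * (g1 t * g2 t)) = g0 t"
      using eventually_ge_at_top[of 0]
      by (rule eventually_mono) (use g0_square positive(1) in \<open>auto intro!: real_sqrt_unique less_imp_le simp: mult.assoc\<close>)
  qed
  then show lim0: "(g0 \<longlongrightarrow> sqrt K * L) at_top"
    using \<open>0 < L\<close> K_pos by (simp add: real_sqrt_mult)
  have "(g3 \<longlongrightarrow> (h0 * h1 * h2 * h3) / (sqrt K * L * L * L)) at_top"
  proof (rule Lim_transform_eventually)
    show "((\<lambda>t. (h0 * h1 * h2 * h3) / (g0 t * g1 t * g2 t)) \<longlongrightarrow> (h0 * h1 * h2 * h3) / (sqrt K * L * L * L)) at_top"
      using \<open>0 < L\<close> K_pos by (intro tendsto_intros lim0 lim1 lim2) auto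
    show "\<forall>\<^sub>F t in at_top. (h0 * h1 * h2 * h3) / (g0 t * g1 t * g2 t) = g3 t"
      using eventually_ge_at_top[of 0]
      by (rule eventually_mono) (use det_conserved positive in \<open>force simp: field_simps\<close>)
  qed
  then show "(g3 \<longlongrightarrow> (h0 * h1 * h2 * h3) / (sqrt K * L^3)) at_top"
    by (simp add: power3_eq_cube mult.assoc)
qed

lemma common_limit: "\<exists>L>0. (g1 \<longlongrightarrow> L) at_top \<and> (g2 \<longlongrightarrow> L) at_top"
proof -
  consider "h1 = h2" | "h1 < h2" | "h2 < h1" by linarith
  then show ?thesis
  proof cases
    case 1
    have "\<forall>\<^sub>F t in at_top. h1 = g1 t" "\<forall>\<^sub>F t in at_top. h1 = g2 t"
      using constant_if_equal[OF 1] 1 by (auto intro: eventually_mono[OF eventually_ge_at_top[of 0]])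
    then have "(g1 \<longlongrightarrow> h1) at_top" "(g2 \<longlongrightarrow> h1) at_top"
      by (auto intro: Lim_transform_eventually[OF tendsto_const])
    with h_pos show ?thesis by blast
  next
    case 2
    then show ?thesis by (rule common_limit_if_less)
  next
    case 3
    interpret swapped: bach_solution h0 h2 h1 h3 g0 g2 g1 g3
      using h_pos bach_sol_swap[OF sol] by unfold_locales
    from swapped.common_limit_if_less[OF 3] show ?thesis by blast
  qed
qed

lemma tendsto_limits:
  shows "(g1 \<longlongrightarrow> (432 * eta) powr (1/40)) at_top"
    and "(g2 \<longlongrightarrow> (432 * eta) powr (1/40)) at_top"
    and "(g0 \<longlongrightarrow> sqrt (h0^3 * h3 / (h0 * h1 * h2 * h3)) * (432 * eta) powr (1/40)) at_top"
    and "(g3 \<longlongrightarrow> sqrt ((h0 * h1 * h2 * h3)^3 / (h0^3 * h3)) * (432 * eta) powr (-3/40)) at_top"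
proof -
  obtain L where "0 < L" and lim: "(g1 \<longlongrightarrow> L) at_top" "(g2 \<longlongrightarrow> L) at_top"
    using common_limit by blast
  note L = limits_if_common_limit[OF lim \<open>0 < L\<close>]
  show "(g1 \<longlongrightarrow> (432 * eta) powr (1/40)) at_top" "(g2 \<longlongrightarrow> (432 * eta) powr (1/40)) at_top"
    using lim by (simp_all flip: L(1))
  show "(g0 \<longlongrightarrow> sqrt (h0^3 * h3 / (h0 * h1 * h2 * h3)) * (432 * eta) powr (1/40)) at_top"
    using L(2) by (simp flip: L(1) add: K_def)
  have "(432 * eta) powr (-3/40) = ((432 * eta) powr (1/40)) powr (-3)" by (simp add: powr_powr)
  also have "\<dots> = 1 / L^3" using \<open>0 < L\<close> by (simp flip: L(1) add: powr_minus_divide powr_realpow)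
  finally have L3: "(432 * eta) powr (-3/40) = 1 / L^3" .
  have "sqrt ((h0 * h1 * h2 * h3)^3 / (h0^3 * h3)) = sqrt (((h0 * h1 * h2 * h3) / sqrt K)^2)"
    using h_pos K_pos by (simp add: K_def power2_eq_square power3_eq_cube field_simps)
  also have "\<dots> = (h0 * h1 * h2 * h3) / sqrt K" using h_pos K_pos by simp
  finally have "(h0 * h1 * h2 * h3) / (sqrt K * L^3)
      = sqrt ((h0 * h1 * h2 * h3)^3 / (h0^3 * h3)) * (432 * eta) powr (-3/40)"
    unfolding L3 by simp
  then show "(g3 \<longlongrightarrow> sqrt ((h0 * h1 * h2 * h3)^3 / (h0^3 * h3)) * (432 * eta) powr (-3/40)) at_top"
    using L(3) by metis
qed

end

section \<open>Existence\<close>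

locale bach_construction =
  fixes h0 h1 h2 h3 :: real
  assumes h_pos: "0 < h0" "0 < h1" "0 < h2" "0 < h3" and lt: "h1 < h2"
begin

definition "dh = h0 * h1 * h2 * h3"
definition "\<beta> = 1 / (6 * dh^2)"
definition "K = h0^3 * h3 / dh"
definition "l0 = h2 / h1"
text \<open>On the level set of the first integral through \<open>(h1, h2)\<close>, the point with ratio
  \<open>g2 / g1 = l\<close> has \<open>g1 = X l\<close>, and along the flow the ratio moves by \<open>l' = - l W l\<close>.\<close>

definition "X l = h1 * exp (bach_phi l0 - bach_phi l)"
definition "W l = 4 * \<beta> * K * (l - 1) * l * (1 + l) * (2 * l^2 - l + 2) * (X l)^6"
definition "\<rho>1 l = l * W l * bach_phi' l"

lemma l0_gt_1: "1 < l0"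
  using h_pos lt by (simp add: l0_def)

lemma X_pos: "0 < X l"
  using h_pos by (simp add: X_def)

lemma X_has_derivative: "0 < l \<Longrightarrow> (X has_real_derivative X l * (- bach_phi' l)) (at l)"
  unfolding X_def[abs_def]
  by (rule derivative_eq_intros bach_phi_has_derivative refl | simp)+

lemma continuous_on_W: "continuous_on {0<..} W"
proof -
  have "continuous_on {0<..} X"
    using X_has_derivative by (auto intro!: continuous_at_imp_continuous_on DERIV_isCont)
  then show ?thesis unfolding W_def[abs_def] by (intro continuous_intros)
qed

lemma W_pos: "1 < l \<Longrightarrow> 0 < W l"
  using h_pos X_pos[of l] invariant_quadratic_pos[of 1 l]
  by (simp add: W_def \<beta>_def K_def dh_def)

lemma curve_rates:
  assumes "0 < l"
  defines "Y \<equiv> X l"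
  shows "\<rho>1 l = - \<beta> * (K * l * Y^2) * bach_q (- Y) (l * Y)"
    and "- W l + \<rho>1 l = - \<beta> * (K * l * Y^2) * bach_q (l * Y) (- Y)"
    and "- W l / 2 + \<rho>1 l = - \<beta> * (K * l * Y^2) * bach_p (- Y) (l * Y)"
proof -
  have phi: "4 * l * (1 + l) * (2 * l^2 - l + 2) * (l - 1) * bach_phi' l = - bach_q (-1) l"
    by (rule bach_phi'_eq[OF assms(1)])
  have q: "bach_q l (- 1) - bach_q (- 1) l = 4 * (l - 1) * (l + 1) * (2 * l^2 - l + 2)"
    using bach_q_diff[of l 1] by simp
  have p: "bach_p (- 1) l - bach_q (- 1) l = 2 * (l - 1) * (l + 1) * (2 * l^2 - l + 2)"
    using bach_p_minus_bach_q[of 1 l] by simp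
  show "\<rho>1 l = - \<beta> * (K * l * Y^2) * bach_q (- Y) (l * Y)"
    using phi unfolding \<rho>1_def W_def Y_def bach_q_def by algebra
  show "- W l + \<rho>1 l = - \<beta> * (K * l * Y^2) * bach_q (l * Y) (- Y)"
    using phi q unfolding \<rho>1_def W_def Y_def bach_q_def by algebra
  show "- W l / 2 + \<rho>1 l = - \<beta> * (K * l * Y^2) * bach_p (- Y) (l * Y)"
    using phi p unfolding \<rho>1_def W_def Y_def bach_q_def bach_p_def by algebra
qed

lemma K_pos: "0 < K"
  using h_pos by (simp add: K_def dh_def)

lemma ratio_curve_has_derivatives:
  assumes du: "(u has_real_derivative - (u t * W (u t))) (at t)" and l: "1 < u t"
  shows "((\<lambda>t. X (u t)) has_real_derivative X (u t) * \<rho>1 (u t)) (at t)"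
    and "((\<lambda>t. u t * X (u t)) has_real_derivative (u t * X (u t)) * (- W (u t) + \<rho>1 (u t))) (at t)"
    and "((\<lambda>t. sqrt (K * u t) * X (u t)) has_real_derivative
        (sqrt (K * u t) * X (u t)) * (- W (u t) / 2 + \<rho>1 (u t))) (at t)"
proof -
  show d1: "((\<lambda>t. X (u t)) has_real_derivative X (u t) * \<rho>1 (u t)) (at t)"
    using DERIV_chain2[OF X_has_derivative du] l by (simp add: \<rho>1_def algebra_simps)
  have du': "(u has_real_derivative u t * (- W (u t))) (at t)"
    using du by simp
  then show "((\<lambda>t. u t * X (u t)) has_real_derivative (u t * X (u t)) * (- W (u t) + \<rho>1 (u t))) (at t)"
    by (rule has_real_derivative_mult_rates[OF _ d1])
  have "((\<lambda>t. sqrt (K * u t)) has_real_derivative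
      inverse (sqrt (K * u t)) / 2 * (K * - (u t * W (u t)))) (at t)"
    by (rule DERIV_chain2[OF DERIV_real_sqrt DERIV_cmult[OF du]]) (use l K_pos in simp)
  moreover have "inverse (sqrt (K * u t)) / 2 * (K * - (u t * W (u t))) = sqrt (K * u t) * (- W (u t) / 2)"
    using l K_pos by (simp add: field_simps real_sqrt_mult)
  ultimately have "((\<lambda>t. sqrt (K * u t)) has_real_derivative sqrt (K * u t) * (- W (u t) / 2)) (at t)"
    by metis
  from has_real_derivative_mult_rates[OF this d1]
  show "((\<lambda>t. sqrt (K * u t) * X (u t)) has_real_derivative
      (sqrt (K * u t) * X (u t)) * (- W (u t) / 2 + \<rho>1 (u t))) (at t)" .
qed

lemma bach_sol_of_ratio:
  assumes u0: "u 0 = l0" and u_gt: "\<And>t. 0 \<le> t \<Longrightarrow> 1 < u t"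
    and du: "\<And>t. 0 \<le> t \<Longrightarrow> (u has_real_derivative - (u t * W (u t))) (at t)"
  defines "g0 \<equiv> \<lambda>t. sqrt (K * u t) * X (u t)" and "g1 \<equiv> \<lambda>t. X (u t)"
    and "g2 \<equiv> \<lambda>t. u t * X (u t)"
    and "g3 \<equiv> \<lambda>t. dh / (sqrt (K * u t) * X (u t) * X (u t) * (u t * X (u t)))"
  shows "bach_sol h0 h1 h2 h3 g0 g1 g2 g3"
proof -
  have g3_eq: "g3 = (\<lambda>t. dh / (g0 t * g1 t * g2 t))" by (simp add: g0_def g1_def g2_def g3_def)
  have rates: "(g0 has_real_derivative g0 t * (- \<beta> * (g0 t)^2 * bach_p (- g1 t) (g2 t))) (at t)"
    "(g1 has_real_derivative g1 t * (- \<beta> * (g0 t)^2 * bach_q (- g1 t) (g2 t))) (at t)"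
    "(g2 has_real_derivative g2 t * (- \<beta> * (g0 t)^2 * bach_q (g2 t) (- g1 t))) (at t)"
    if t: "0 \<le> t" for t
  proof -
    note d = ratio_curve_has_derivatives[OF du[OF t] u_gt[OF t]]
    have g0_sq: "(g0 t)^2 = K * u t * (X (u t))^2"
      using K_pos u_gt[OF t] by (simp add: g0_def power_mult_distrib)
    show "(g0 has_real_derivative g0 t * (- \<beta> * (g0 t)^2 * bach_p (- g1 t) (g2 t))) (at t)"
      unfolding g0_sq using d(3) curve_rates(3)[of "u t"] u_gt[OF t] by (simp add: g0_def g1_def g2_def)
    show "(g1 has_real_derivative g1 t * (- \<beta> * (g0 t)^2 * bach_q (- g1 t) (g2 t))) (at t)"
      unfolding g0_sq using d(1) curve_rates(1)[of "u t"] u_gt[OF t] by (simp add: g1_def g2_def)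
    show "(g2 has_real_derivative g2 t * (- \<beta> * (g0 t)^2 * bach_q (g2 t) (- g1 t))) (at t)"
      unfolding g0_sq using d(2) curve_rates(2)[of "u t"] u_gt[OF t] by (simp add: g1_def g2_def)
  qed
  have pos: "0 < g0 t * g1 t * g2 t" if "0 \<le> t" for t
    using u_gt[OF that] K_pos X_pos by (simp add: g0_def g1_def g2_def)
  have rate3: "(g3 has_real_derivative g3 t * (3 * \<beta> * (g0 t)^2 * bach_p (- g1 t) (g2 t))) (at t)"
    if t: "0 \<le> t" for t
  proof -
    have "(g3 has_real_derivative g3 t * (- (- \<beta> * (g0 t)^2 * bach_p (- g1 t) (g2 t)
        + - \<beta> * (g0 t)^2 * bach_q (- g1 t) (g2 t) + - \<beta> * (g0 t)^2 * bach_q (g2 t) (- g1 t)))) (at t)"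
      unfolding g3_eq using pos[OF t]
      by (intro has_real_derivative_divide_rate has_real_derivative_mult_rates rates[OF t])
        (metis less_irrefl)
    moreover have "- (- \<beta> * (g0 t)^2 * bach_p (- g1 t) (g2 t) + - \<beta> * (g0 t)^2 * bach_q (- g1 t) (g2 t)
        + - \<beta> * (g0 t)^2 * bach_q (g2 t) (- g1 t)) = 3 * \<beta> * (g0 t)^2 * bach_p (- g1 t) (g2 t)"
      using bach_q_add[of "g1 t" "g2 t"] by algebra
    ultimately show ?thesis by metis
  qed
  have init: "g0 0 = h0" "g1 0 = h1" "g2 0 = h2" "g3 0 = h3"
  proof -
    have X0: "X l0 = h1" by (simp add: X_def)
    show g1: "g1 0 = h1" by (simp add: g1_def u0 X0)
    show g2: "g2 0 = h2" using h_pos by (simp add: g2_def u0 X0) (simp add: l0_def)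
    have "K * l0 = (h0 / h1)^2" using h_pos by (simp add: K_def l0_def dh_def field_simps power2_eq_square power3_eq_cube)
    then show g0: "g0 0 = h0" using h_pos by (simp add: g0_def u0 X0)
    show "g3 0 = h3" using h_pos by (simp add: g3_eq g0 g1 g2 dh_def)
  qed
  show ?thesis
    unfolding bach_sol_def Let_def dh_def[symmetric] \<beta>_def[symmetric]
  proof (intro conjI allI impI init)
    fix t :: real assume "0 \<le> t"
    note r = rates[OF this] rate3[OF this]
    show "(g0 has_real_derivative - \<beta> * bach_p (- g1 t) (g2 t) * (g0 t)^3) (at t within {0..})"
      using has_field_derivative_at_within[OF r(1)] by (simp add: power3_eq_cube power2_eq_square algebra_simps)
    show "(g1 has_real_derivative - \<beta> * bach_q (- g1 t) (g2 t) * (g0 t)^2 * g1 t) (at t within {0..})"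
      using has_field_derivative_at_within[OF r(2)] by (simp add: algebra_simps)
    show "(g2 has_real_derivative - \<beta> * bach_q (g2 t) (- g1 t) * (g0 t)^2 * g2 t) (at t within {0..})"
      using has_field_derivative_at_within[OF r(3)] by (simp add: algebra_simps)
    show "(g3 has_real_derivative 3 * \<beta> * bach_p (- g1 t) (g2 t) * (g0 t)^2 * g3 t) (at t within {0..})"
      using has_field_derivative_at_within[OF r(4)] by (simp add: algebra_simps)
  qed
qed

lemma solution_exists: "\<exists>g0 g1 g2 g3. bach_sol h0 h1 h2 h3 g0 g1 g2 g3"
proof -
  define R where "R l = 4 * \<beta> * K * l^2 * (1 + l) * (2 * l^2 - l + 2) * (X l)^6" for l
  have W_eq: "l * W l = (l - 1) * R l" for l by (simp add: W_def R_def algebra_simps power2_eq_square)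
  have "continuous_on {0<..} X"
    using X_has_derivative by (auto intro!: continuous_at_imp_continuous_on DERIV_isCont)
  then have "continuous_on {1..l0} R"
    unfolding R_def[abs_def] by (intro continuous_intros) (auto elim: continuous_on_subset)
  then obtain C where C: "\<And>l. l \<in> {1..l0} \<Longrightarrow> norm (R l) \<le> C"
    using continuous_on_compact_bound[of "{1..l0}" R] by auto
  have cont: "continuous_on {1<..} (\<lambda>l. l * W l)"
    by (intro continuous_intros continuous_on_subset[OF continuous_on_W]) auto
  have pos: "0 < l * W l" if "1 < l" for l using W_pos[OF that] that by simp
  have bound: "l * W l \<le> C * (l - 1)" if "1 < l" "l \<le> l0" for l
    using C[of l] that mult_left_mono[of "R l" C "l - 1"] by (simp add: W_eq mult.commute)
  obtain u where "u 0 = l0" "\<And>t. 0 \<le> t \<Longrightarrow> 1 < u t"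
    "\<And>t. 0 \<le> t \<Longrightarrow> (u has_real_derivative - (u t * W (u t))) (at t)"
    by (rule autonomous_ode_decreasing_solution[OF l0_gt_1 cont pos bound]) auto
  from bach_sol_of_ratio[OF this] show ?thesis by blast
qed

end

lemma bach_sol_exists:
  fixes h0 h1 h2 h3 :: real
  assumes "0 < h0" "0 < h1" "0 < h2" "0 < h3"
  shows "\<exists>g0 g1 g2 g3. bach_sol h0 h1 h2 h3 g0 g1 g2 g3"
proof -
  consider "h1 = h2" | "h1 < h2" | "h2 < h1" by linarith
  then show ?thesis
  proof cases
    case 1
    have "bach_p (- x) x = 0" "bach_q (- x) x = 0" "bach_q x (- x) = 0" for x
      by (simp_all add: bach_p_minus_eq bach_q_minus_left_eq bach_q_minus_right_eq)
    then have "bach_sol h0 h1 h2 h3 (\<lambda>_. h0) (\<lambda>_. h1) (\<lambda>_. h2) (\<lambda>_. h3)"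
      using 1 by (simp add: bach_sol_def Let_def)
    then show ?thesis by blast
  next
    case 2
    then interpret bach_construction h0 h1 h2 h3 using assms by unfold_locales
    show ?thesis by (rule solution_exists)
  next
    case 3
    then interpret bach_construction h0 h2 h1 h3 using assms by unfold_locales
    from solution_exists show ?thesis by (blast dest: bach_sol_swap)
  qed
qed

theorem theorem5p6:
  fixes h0 h1 h2 h3 :: real
  assumes "h0 > 0" "h1 > 0" "h2 > 0" "h3 > 0"
  defines "dh \<equiv> h0 * h1 * h2 * h3"
  defines "\<eta> \<equiv> (h1 * h2)^25 / ((h2 + h1)^4 * (2*h2^2 - h1*h2 + 2*h1^2)^3)"
  shows "(\<exists>g0 g1 g2 g3. bach_sol h0 h1 h2 h3 g0 g1 g2 g3) \<and>
    (\<forall>g0 g1 g2 g3. bach_sol h0 h1 h2 h3 g0 g1 g2 g3 \<longrightarrow>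
       mono_on {0..} g3 \<and>
       (\<forall>t\<ge>0. (g1 t * g2 t)^25 =
           \<eta> * (g2 t + g1 t)^4 * (2 * (g2 t)^2 - g1 t * g2 t + 2 * (g1 t)^2)^3) \<and>
       (g1 \<longlongrightarrow> (432 * \<eta>) powr (1/40)) at_top \<and>
       (g2 \<longlongrightarrow> (432 * \<eta>) powr (1/40)) at_top \<and>
       (g0 \<longlongrightarrow> sqrt (h0^3 * h3 / dh) * (432 * \<eta>) powr (1/40)) at_top \<and>
       (g3 \<longlongrightarrow> sqrt (dh^3 / (h0^3 * h3)) * (432 * \<eta>) powr (-3/40)) at_top \<and>
       (h1 = h2 \<longrightarrow> (\<forall>t\<ge>0. g0 t = h0 \<and> g1 t = h1 \<and> g2 t = h2 \<and> g3 t = h3)) \<and>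
       (h1 < h2 \<longrightarrow> (\<forall>t\<ge>0. g1 t < g2 t) \<and> strict_mono_on {0..} g1 \<and>
           strict_antimono_on {0..} g2))"
  apply (intro conjI[OF bach_sol_exists[OF assms(1-4)]] allI impI)
  subgoal premises sol for g0 g1 g2 g3
  proof -
    interpret bach_solution h0 h1 h2 h3 g0 g1 g2 g3 using assms(1-4) sol by unfold_locales
    have "\<eta> = eta" by (simp add: \<eta>_def eta_def)
    moreover have "h1 = h2 \<longrightarrow> (\<forall>t\<ge>0. g0 t = h0 \<and> g1 t = h1 \<and> g2 t = h2 \<and> g3 t = h3)"
      using constant_if_equal by blast
    moreover have "h1 < h2 \<longrightarrow> (\<forall>t\<ge>0. g1 t < g2 t) \<and> strict_mono_on {0..} g1 \<and>
        strict_antimono_on {0..} g2"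
      using g1_less_g2 g1_strict_mono g2_strict_antimono by blast
    ultimately show ?thesis using g3_mono invariant tendsto_limits by (simp add: dh_def)
  qed
  done

end
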